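(* Let $N\in\mathbb{N}$, $\xi$ a Dirichlet character modulo $N$, $k$ a positive integer with $\xi(-1)=(-1)^k$, and $\{f_n\}_{n\ge1},\{g_n\}_{n\ge1}$ complex sequences with $f_n,g_n=O(n^\sigma)$ for some $\sigma>0$. Suppose that for every $q\in\mathbb{N}$ with $(q,N)=1$, $\Lambda_f(s,c_q)$ and $\Lambda_g(s,c_q)$ continue to entire functions of finite order and satisfy $\Lambda_f(s,c_q)=i^k\xi(q)(Nq^2)^{\frac12-s}\Lambda_g(1-s,c_q)$. Suppose that $f(z)=\sum_{n\ge1}f_ne(nz)$ is not identically $0$. Then for any prime $q\nmid N$ there exists $n\in\mathbb{N}$ with $q\mid n$ such that $f_n\neq0$ or $g_n\ne0$.
   Context: $e(x):=e^{2\pi i x}$; $c_q(n)=\sum_{a \bmod q,\,(a,q)=1}e(an/q)$ is the Ramanujan sum; $\Gamma_\mathbb{C}(s):=2(2\pi)^{-s}\Gamma(s)$; for $\Re(s)>\sigma+1-\frac{k-1}2$, $\Lambda_f(s,c_q)=\Gamma_\mathbb{C}(s+\frac{k-1}2)\sum_{n\ge1}f_nc_q(n)n^{-s-\frac{k-1}2}$ and similarly $\Lambda_g(s,c_q)$ with $g_n$. *)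

theory Defs
  imports "HOL-Analysis.Analysis"
begin

definition e :: "complex \<Rightarrow> complex" where
  "e x = exp (2 * of_real pi * \<i> * x)"

definition dirichlet_character :: "nat \<Rightarrow> (int \<Rightarrow> complex) \<Rightarrow> bool" where
  "dirichlet_character N chi \<longleftrightarrow> N > 0 \<and>
     (\<forall>m n. chi (m * n) = chi m * chi n) \<and>
     (\<forall>n. chi (n + int N) = chi n) \<and>
     (\<forall>n. chi n \<noteq> 0 \<longleftrightarrow> coprime n (int N))"

definition ramanujan_sum :: "nat \<Rightarrow> nat \<Rightarrow> complex" where
  "ramanujan_sum q n = (\<Sum>a\<in>{a. a < q \<and> coprime a q}. e (of_nat a * of_nat n / of_nat q))"

definition Gamma_C :: "complex \<Rightarrow> complex" where
  "Gamma_C s = 2 * (of_real (2 * pi)) powr (- s) * Gamma s"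

text \<open>Lambda_f(s, c_q) given by its Dirichlet series (meaningful for Re s large).\<close>
definition Lambda_series :: "(nat \<Rightarrow> complex) \<Rightarrow> nat \<Rightarrow> nat \<Rightarrow> complex \<Rightarrow> complex" where
  "Lambda_series f k q s = Gamma_C (s + (of_nat k - 1) / 2) *
     (\<Sum>n. f (Suc n) * ramanujan_sum q (Suc n) * of_nat (Suc n) powr (- (s + (of_nat k - 1) / 2)))"

definition entire_finite_order :: "(complex \<Rightarrow> complex) \<Rightarrow> bool" where
  "entire_finite_order F \<longleftrightarrow> F holomorphic_on UNIV \<and>
     (\<exists>\<rho> C. \<forall>s. norm (F s) \<le> C * exp (norm s powr \<rho>))"

end

theory Submission
  imports Defs "HOL-Complex_Analysis.Complex_Analysis" "HOL-Real_Asymp.Real_Asymp"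
begin

text \<open>
  Suppose all \<open>f\<^sub>n\<close>, \<open>g\<^sub>n\<close> with \<open>q | n\<close> vanish. As \<open>c\<^sub>1(n) = 1\<close> and \<open>c\<^sub>q(n) = -1\<close> for
  \<open>q \<nmid> n\<close>, we get \<open>\<Lambda>\<^sub>f(s, c\<^sub>q) = -\<Lambda>\<^sub>f(s, c\<^sub>1)\<close> on a half-plane, hence everywhere by analytic
  continuation, and likewise for \<open>g\<close>. Comparing the functional equations for \<open>q\<close> and for \<open>1\<close>
  then gives \<open>\<Lambda>\<^sub>f(s, c\<^sub>1) = \<xi>(q) (q\<^sup>2)\<^bsup>1/2 - s\<^esup> \<Lambda>\<^sub>f(s, c\<^sub>1)\<close>. The factor tends to \<open>0\<close> as
  \<open>s \<rightarrow> +\<infinity>\<close> along the reals, so \<open>\<Sum> f\<^sub>n n\<^sup>-\<^sup>x = 0\<close> for all large \<open>x\<close>, and uniqueness of Dirichlet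
  coefficients forces \<open>f = 0\<close>.
\<close>

lemma ramanujan_sum_1: "ramanujan_sum 1 n = 1"
proof -
  have "{a::nat. a < 1 \<and> coprime a 1} = {0}" by auto
  thus ?thesis by (simp add: ramanujan_sum_def e_def)
qed

lemma ramanujan_sum_prime_not_dvd:
  assumes q: "prime q" and not_dvd: "\<not> q dvd n"
  shows "ramanujan_sum q n = -1"
proof -
  have q1: "q > 1" using q prime_gt_1_nat by blast
  have units: "{a. a < q \<and> coprime a q} = {1..<q}"
  proof safe
    fix a assume "a < q" "coprime a q"
    thus "a \<in> {1..<q}" using q1 by (cases "a = 0") auto
  next
    fix a assume "a \<in> {1..<q}"
    hence "\<not> q dvd a" by (auto dest: dvd_imp_le)
    thus "coprime a q" using q by (metis coprime_commute prime_imp_coprime)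
  qed auto
  define z where "z = e (of_nat n / of_nat q)"
  have e_pow: "e (of_nat a * of_nat n / of_nat q) = z ^ a" for a
  proof -
    have "e (of_nat a * of_nat n / of_nat q) = exp (of_nat a * (2 * of_real pi * \<i> * (of_nat n / of_nat q)))"
      unfolding e_def by (rule arg_cong[where f=exp]) (simp add: field_simps)
    also have "\<dots> = z ^ a" unfolding z_def e_def by (rule exp_of_nat_mult)
    finally show ?thesis .
  qed
  have z_root: "z ^ q = 1"
  proof -
    have "z ^ q = exp (2 * of_real pi * \<i> * of_nat n)"
      using q1 by (simp add: z_def e_def exp_of_nat_mult[symmetric] field_simps)
    also have "\<dots> = 1" by (simp add: exp_eq_1) (metis of_int_of_nat_eq mult.commute)
    finally show ?thesis .
  qed
  have z_ne_1: "z \<noteq> 1"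
  proof
    assume "z = 1"
    then obtain m :: int where "2 * pi * (real n / real q) = of_int (2 * m) * pi"
      unfolding z_def e_def exp_eq_1 by auto
    hence "real n = real q * of_int m" using q1 by (simp add: field_simps)
    hence "int n = int q * m" by (metis of_int_eq_iff of_int_mult of_int_of_nat_eq)
    thus False using not_dvd by (metis dvd_triv_left int_dvd_int_iff)
  qed
  have "{..<q} = insert 0 {1..<q}" using q1 by auto
  hence "ramanujan_sum q n = (\<Sum>a<q. z ^ a) - 1"
    unfolding ramanujan_sum_def units using e_pow by simp
  also have "(\<Sum>a<q. z ^ a) = 0" using z_ne_1 z_root by (simp add: sum_gp_strict)
  finally show ?thesis by simp
qed

lemma summable_norm_mult_powr:
  fixes a :: "nat \<Rightarrow> 'a::real_normed_vector"
  assumes bound: "\<And>n. n \<ge> 1 \<Longrightarrow> norm (a n) \<le> C * real n powr \<sigma>"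
    and x: "x > \<sigma> + 1"
  shows "summable (\<lambda>n. norm (a (Suc n)) * real (Suc n) powr (-x))"
proof (rule summable_comparison_test)
  have "summable (\<lambda>n. real n powr (\<sigma> - x))" using x by (simp add: summable_real_powr_iff)
  hence "summable (\<lambda>n. real (Suc n) powr (\<sigma> - x))"
    using summable_Suc_iff[of "\<lambda>n. real n powr (\<sigma> - x)"] by simp
  thus "summable (\<lambda>n. C * real (Suc n) powr (\<sigma> - x))" by (rule summable_mult)
  have "norm (a (Suc n)) * real (Suc n) powr (-x) \<le> (C * real (Suc n) powr \<sigma>) * real (Suc n) powr (-x)" for n
    by (rule mult_right_mono) (use bound[of "Suc n"] in auto)
  thus "\<exists>N. \<forall>n\<ge>N. norm (norm (a (Suc n)) * real (Suc n) powr (-x)) \<le> C * real (Suc n) powr (\<sigma> - x)"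
    by (simp add: powr_add[symmetric] mult.assoc)
qed

lemma summable_mult_complex_powr:
  fixes a :: "nat \<Rightarrow> complex"
  assumes bound: "\<And>n. n \<ge> 1 \<Longrightarrow> norm (a n) \<le> C * real n powr \<sigma>"
    and w: "Re w > \<sigma> + 1"
  shows "summable (\<lambda>n. a (Suc n) * of_nat (Suc n) powr (-w))"
proof (rule summable_norm_cancel)
  have "norm (a (Suc n) * of_nat (Suc n) powr (-w)) = norm (a (Suc n)) * real (Suc n) powr (- Re w)" for n
    by (simp add: norm_mult norm_powr_real_powr)
  thus "summable (\<lambda>n. norm (a (Suc n) * of_nat (Suc n) powr (-w)))"
    using summable_norm_mult_powr[OF bound w] by simp
qed

lemma suminf_shift_powr_le:
  fixes A :: "nat \<Rightarrow> real"
  assumes nonneg: "\<And>n. A n \<ge> 0"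
    and summable: "summable (\<lambda>n. A (n + M) * real (n + M) powr (-y))"
    and M: "M > 0" and xy: "y \<le> x"
  shows "(\<Sum>n. A (n + M) * real (n + M) powr (-x))
           \<le> real M powr (y - x) * (\<Sum>n. A (n + M) * real (n + M) powr (-y))"
proof -
  have term_le: "A (n + M) * real (n + M) powr (-x) \<le> real M powr (y - x) * (A (n + M) * real (n + M) powr (-y))" for n
  proof -
    have "real (n + M) powr (y - x) \<le> real M powr (y - x)"
      using M xy by (intro powr_mono2') auto
    hence "A (n + M) * (real (n + M) powr (-y) * real (n + M) powr (y - x))
             \<le> A (n + M) * (real (n + M) powr (-y) * real M powr (y - x))"
      using nonneg by (intro mult_left_mono) auto
    thus ?thesis by (simp add: powr_add[symmetric] mult_ac)
  qed
  have summable_mult: "summable (\<lambda>n. real M powr (y - x) * (A (n + M) * real (n + M) powr (-y)))"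
    using summable by (rule summable_mult)
  have "(\<Sum>n. A (n + M) * real (n + M) powr (-x)) \<le> (\<Sum>n. real M powr (y - x) * (A (n + M) * real (n + M) powr (-y)))"
    using term_le nonneg summable_mult
    by (intro suminf_le summable_comparison_test'[OF summable_mult]) auto
  also have "\<dots> = real M powr (y - x) * (\<Sum>n. A (n + M) * real (n + M) powr (-y))"
    using summable by (rule suminf_mult)
  finally show ?thesis .
qed

lemma Dirichlet_coeff_eq_0_if_series_eq_0:
  fixes a :: "nat \<Rightarrow> complex"
  assumes bound: "\<And>n. n \<ge> 1 \<Longrightarrow> norm (a n) \<le> C * real n powr \<sigma>"
    and X0: "X0 > \<sigma> + 1"
    and zero: "\<And>x. x \<ge> X0 \<Longrightarrow> (\<Sum>n. a (Suc n) * of_real (real (Suc n) powr (-x))) = 0"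
  shows "a (Suc m) = 0"
proof (induction m rule: less_induct)
  case (less m)
  define M where "M = Suc m"
  define K where "K = (\<Sum>n. norm (a (n + Suc M)) * real (n + Suc M) powr (-X0))"
  have summable_K: "summable (\<lambda>n. norm (a (n + Suc M)) * real (n + Suc M) powr (-X0))"
    using summable_ignore_initial_segment[OF summable_norm_mult_powr[OF bound X0], of M]
    by (simp add: add_Suc_right)
  \<comment> \<open>The earlier coefficients vanish, so \<open>a\<^sub>M M\<^sup>-\<^sup>x\<close> equals minus the tail, which decays like \<open>(M+1)\<^sup>-\<^sup>x\<close>.\<close>
  have tail_bound: "norm (a M) * real M powr (-x) \<le> real (Suc M) powr (X0 - x) * K" if x: "x \<ge> X0" for x
  proof -
    define b where "b n = a (Suc n) * of_real (real (Suc n) powr (-x))" for n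
    have norm_b: "norm (b n) = norm (a (Suc n)) * real (Suc n) powr (-x)" for n
      unfolding b_def by (simp add: norm_mult)
    have summable_b: "summable (\<lambda>n. norm (b n))"
      unfolding norm_b using X0 x by (intro summable_norm_mult_powr[OF bound]) auto
    have "0 = suminf b" using zero[OF x] unfolding b_def by simp
    also have "\<dots> = (\<Sum>n. b (n + M)) + (\<Sum>i<M. b i)"
      by (rule suminf_split_initial_segment[OF summable_norm_cancel[OF summable_b]])
    also have "(\<Sum>i<M. b i) = b m" using less by (simp add: b_def M_def)
    finally have "b m = - (\<Sum>n. b (n + M))" by (simp add: eq_neg_iff_add_eq_0 add.commute)
    hence "norm (b m) \<le> (\<Sum>n. norm (b (n + M)))"
      using summable_norm[OF summable_ignore_initial_segment[OF summable_b]] by simp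
    also have "\<dots> = (\<Sum>n. norm (a (n + Suc M)) * real (n + Suc M) powr (-x))"
      unfolding norm_b by (simp add: add_Suc_right)
    also have "\<dots> \<le> real (Suc M) powr (X0 - x) * K"
      unfolding K_def using summable_K x by (intro suminf_shift_powr_le) auto
    finally show ?thesis by (simp add: norm_b M_def)
  qed
  have M_pos: "real M > 0" by (simp add: M_def)
  have geometric_bound: "norm (a M) * real M powr (-X0) \<le> K * (real M / real (Suc M)) ^ j" for j
  proof -
    have "real M powr (- (X0 + real j)) = real M powr (-X0) / real M ^ j"
      "real (Suc M) powr (X0 - (X0 + real j)) = 1 / real (Suc M) ^ j"
      using M_pos by (simp_all add: powr_diff powr_minus powr_realpow divide_inverse)
    hence "norm (a M) * real M powr (-X0) / real M ^ j \<le> K / real (Suc M) ^ j"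
      using tail_bound[of "X0 + real j"] by simp
    thus ?thesis using M_pos by (simp add: power_divide field_simps)
  qed
  have "(\<lambda>j. K * (real M / real (Suc M)) ^ j) \<longlonglongrightarrow> 0"
    using M_pos by (intro tendsto_mult_right_zero LIMSEQ_power_zero) auto
  hence "norm (a M) * real M powr (-X0) \<le> 0"
    using geometric_bound by (intro LIMSEQ_le_const) auto
  thus ?case using M_pos by (simp add: M_def mult_le_0_iff)
qed

lemma Lambda_series_prime_eq_neg:
  fixes a :: "nat \<Rightarrow> complex"
  assumes q: "prime q" and bound: "\<And>n. n \<ge> 1 \<Longrightarrow> norm (a n) \<le> C * real n powr \<sigma>"
    and zero: "\<And>n. n \<ge> 1 \<Longrightarrow> q dvd n \<Longrightarrow> a n = 0"
    and s: "Re s > \<sigma> + 1 - (real k - 1) / 2"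
  shows "Lambda_series a k q s = - Lambda_series a k 1 s"
proof -
  define w where "w = s + (of_nat k - 1) / 2"
  have w: "Re w > \<sigma> + 1" using s unfolding w_def by simp
  have "a (Suc n) * ramanujan_sum q (Suc n) * of_nat (Suc n) powr (-w) = - (a (Suc n) * of_nat (Suc n) powr (-w))" for n
    using zero[of "Suc n"] ramanujan_sum_prime_not_dvd[OF q, of "Suc n"] by (cases "q dvd Suc n") auto
  hence "(\<Sum>n. a (Suc n) * ramanujan_sum q (Suc n) * of_nat (Suc n) powr (-w)) = - (\<Sum>n. a (Suc n) * of_nat (Suc n) powr (-w))"
    using suminf_minus[OF summable_mult_complex_powr[OF bound w]] by simp
  thus ?thesis unfolding Lambda_series_def w_def[symmetric] by (simp add: ramanujan_sum_1[unfolded One_nat_def])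
qed

lemma entire_eq_if_eq_on_halfplane:
  fixes F G :: "complex \<Rightarrow> complex"
  assumes "F holomorphic_on UNIV" "G holomorphic_on UNIV" "\<And>s. Re s > c \<Longrightarrow> F s = G s"
  shows "F w = G w"
proof -
  have "F w - G w = 0"
  proof (rule analytic_continuation[of "\<lambda>z. F z - G z" UNIV "{s. Re s > c}" "of_real (c + 1)"])
    show "(\<lambda>z. F z - G z) holomorphic_on UNIV" using assms by (intro holomorphic_on_diff)
    show "of_real (c + 1) islimpt {s. Re s > c}"
      using open_halfspace_Re_gt by (intro interior_limit_point) (simp add: interior_open)
  qed (use assms in auto)
  thus ?thesis by simp
qed

lemma Gamma_C_of_real_nonzero:
  assumes "x > 0"
  shows "Gamma_C (of_real x) \<noteq> 0"
proof -
  have "of_real x \<notin> (\<int>\<^sub>\<le>\<^sub>0 :: complex set)"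
  proof
    assume "of_real x \<in> (\<int>\<^sub>\<le>\<^sub>0 :: complex set)"
    then obtain n :: nat where "(of_real x :: complex) = - of_nat n" by (auto elim!: nonpos_Ints_cases')
    hence "x = - real n" by (metis of_real_eq_iff of_real_minus of_real_of_nat_eq)
    thus False using assms by simp
  qed
  thus ?thesis unfolding Gamma_C_def using Gamma_nonzero by (simp add: powr_def)
qed

lemma Dirichlet_coeff_eq_0_if_Lambda_series_eq_0:
  fixes a :: "nat \<Rightarrow> complex"
  assumes bound: "\<And>n. n \<ge> 1 \<Longrightarrow> norm (a n) \<le> C * real n powr \<sigma>"
    and zero: "eventually (\<lambda>x. Lambda_series a k 1 (of_real x - (of_nat k - 1) / 2) = 0) at_top"
  shows "a (Suc m) = 0"
proof -
  obtain X where X: "\<And>x. x \<ge> X \<Longrightarrow> Lambda_series a k 1 (of_real x - (of_nat k - 1) / 2) = 0"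
    using zero unfolding eventually_at_top_linorder by blast
  define X0 where "X0 = max X (max (\<sigma> + 2) 1)"
  show ?thesis
  proof (rule Dirichlet_coeff_eq_0_if_series_eq_0[OF bound])
    show "X0 > \<sigma> + 1" unfolding X0_def by auto
    fix x :: real assume x: "x \<ge> X0"
    have "(of_nat (Suc n) :: complex) powr (- of_real x) = of_real (real (Suc n) powr (-x))" for n
      by (metis of_real_of_nat_eq of_real_minus powr_of_real of_nat_0_le_iff)
    hence "Lambda_series a k 1 (of_real x - (of_nat k - 1) / 2)
             = Gamma_C (of_real x) * (\<Sum>n. a (Suc n) * of_real (real (Suc n) powr (-x)))"
      unfolding Lambda_series_def by (simp add: ramanujan_sum_1[unfolded One_nat_def])
    moreover have "Gamma_C (of_real x) \<noteq> 0" using x by (intro Gamma_C_of_real_nonzero) (simp add: X0_def)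
    ultimately show "(\<Sum>n. a (Suc n) * of_real (real (Suc n) powr (-x))) = 0"
      using X[of x] x by (simp add: X0_def)
  qed
qed

lemma dirichlet_character_1:
  assumes "dirichlet_character N \<xi>"
  shows "\<xi> 1 = 1"
proof -
  have "\<xi> 1 = \<xi> 1 * \<xi> 1" "\<xi> 1 \<noteq> 0"
    using assms unfolding dirichlet_character_def by (metis mult_1, simp)
  thus ?thesis by simp
qed

lemma eventually_eq_0_if_fixed_by_decaying_factor:
  fixes F :: "complex \<Rightarrow> complex" and z c :: complex and B :: real
  assumes B: "B > 1" and fixed: "\<And>s. F s = z * of_real B powr (1/2 - s) * F s"
  shows "eventually (\<lambda>x. F (of_real x - c) = 0) at_top"
proof -
  have "((\<lambda>x. norm z * B powr (1/2 + Re c - x)) \<longlongrightarrow> 0) at_top"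
    using B by (intro tendsto_mult_right_zero) real_asymp
  hence "eventually (\<lambda>x. norm z * B powr (1/2 + Re c - x) < 1) at_top"
    by (rule order_tendstoD) simp
  thus ?thesis
  proof eventually_elim
    case (elim x)
    have "norm (z * of_real B powr (1/2 - (of_real x - c))) = norm z * B powr (1/2 + Re c - x)"
      using B by (simp add: norm_mult norm_powr_real_powr algebra_simps)
    hence "z * of_real B powr (1/2 - (of_real x - c)) \<noteq> 1" using elim by auto
    thus ?case using fixed[of "of_real x - c"] by (metis mult_cancel_right1 mult.commute)
  qed
qed

lemma functional_equations_fixed_point:
  fixes F1 G1 Fq Gq :: "complex \<Rightarrow> complex" and c z :: complex
  assumes FE1: "F1 s = c * of_nat N powr (1/2 - s) * G1 (1 - s)"
    and FEq: "Fq s = c * z * of_nat (N * q\<^sup>2) powr (1/2 - s) * Gq (1 - s)"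
    and F: "Fq s = - F1 s" and G: "Gq (1 - s) = - G1 (1 - s)"
  shows "F1 s = z * of_real (real (q\<^sup>2)) powr (1/2 - s) * F1 s"
proof -
  define Q where "Q = (of_real (real (q\<^sup>2)) :: complex) powr (1/2 - s)"
  have "(of_nat (N * q\<^sup>2) :: complex) powr (1/2 - s) = of_nat N powr (1/2 - s) * Q"
    unfolding Q_def by (simp add: powr_times_real)
  hence "- F1 s = - (z * Q * (c * of_nat N powr (1/2 - s) * G1 (1 - s)))"
    using FEq F G by (simp add: mult_ac)
  thus ?thesis using FE1 unfolding Q_def by simp
qed

lemma entire_extension_prime_eq_neg:
  fixes a :: "nat \<Rightarrow> complex" and F1 Fq :: "complex \<Rightarrow> complex"
  assumes q: "prime q" and bound: "\<And>n. n \<ge> 1 \<Longrightarrow> norm (a n) \<le> C * real n powr \<sigma>"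
    and zero: "\<And>n. n \<ge> 1 \<Longrightarrow> q dvd n \<Longrightarrow> a n = 0"
    and entire: "entire_finite_order F1" "entire_finite_order Fq"
    and extends: "\<And>s. Re s > \<sigma> + 1 - (real k - 1) / 2 \<Longrightarrow>
                        F1 s = Lambda_series a k 1 s \<and> Fq s = Lambda_series a k q s"
  shows "Fq s = - F1 s"
proof (rule entire_eq_if_eq_on_halfplane[where F = Fq and G = "\<lambda>s. - F1 s" and c = "\<sigma> + 1 - (real k - 1) / 2"])
  show "Fq holomorphic_on UNIV" "(\<lambda>s. - F1 s) holomorphic_on UNIV"
    using entire unfolding entire_finite_order_def by (auto intro: holomorphic_on_minus)
  show "Fq s = - F1 s" if "Re s > \<sigma> + 1 - (real k - 1) / 2" for s
    using extends[OF that] Lambda_series_prime_eq_neg[OF q bound zero that] by simp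
qed

theorem lemma4p6:
  fixes N k :: nat and \<xi> :: "int \<Rightarrow> complex" and f g :: "nat \<Rightarrow> complex" and \<sigma> :: real
  assumes N: "N \<ge> 1"
    and chi: "dirichlet_character N \<xi>"
    and k: "k > 0"
    and parity: "\<xi> (-1) = (-1) ^ k"
    and sigma: "\<sigma> > 0"
    and f_bound: "\<exists>C. \<forall>n\<ge>1. norm (f n) \<le> C * real n powr \<sigma>"
    and g_bound: "\<exists>C. \<forall>n\<ge>1. norm (g n) \<le> C * real n powr \<sigma>"
    and FE: "\<And>q. q \<ge> 1 \<Longrightarrow> coprime q N \<Longrightarrow>
       \<exists>F G. entire_finite_order F \<and> entire_finite_order G \<and>
         (\<forall>s. Re s > \<sigma> + 1 - (real k - 1) / 2 \<longrightarrow>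
               F s = Lambda_series f k q s \<and> G s = Lambda_series g k q s) \<and>
         (\<forall>s. F s = \<i> ^ k * \<xi> (int q) * (of_nat (N * q\<^sup>2)) powr (1/2 - s) * G (1 - s))"
    and nonzero: "\<exists>z. Im z > 0 \<and> (\<Sum>n. f (Suc n) * e (of_nat (Suc n) * z)) \<noteq> 0"
    and q: "prime (q::nat)" "\<not> q dvd N"
  shows "\<exists>n\<ge>1. q dvd n \<and> (f n \<noteq> 0 \<or> g n \<noteq> 0)"
proof (rule ccontr)
  assume "\<not> ?thesis"
  hence f_zero: "\<And>n. n \<ge> 1 \<Longrightarrow> q dvd n \<Longrightarrow> f n = 0"
    and g_zero: "\<And>n. n \<ge> 1 \<Longrightarrow> q dvd n \<Longrightarrow> g n = 0" by auto
  obtain Cf Cg where Cf: "\<And>n. n \<ge> 1 \<Longrightarrow> norm (f n) \<le> Cf * real n powr \<sigma>"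
    and Cg: "\<And>n. n \<ge> 1 \<Longrightarrow> norm (g n) \<le> Cg * real n powr \<sigma>" using f_bound g_bound by blast
  obtain F1 G1 where entire1: "entire_finite_order F1" "entire_finite_order G1"
    and extends1: "\<And>s. Re s > \<sigma> + 1 - (real k - 1) / 2 \<Longrightarrow>
                          F1 s = Lambda_series f k 1 s \<and> G1 s = Lambda_series g k 1 s"
    and FE1: "\<And>s. F1 s = \<i> ^ k * \<xi> 1 * of_nat N powr (1/2 - s) * G1 (1 - s)"
    using FE[of 1] by auto
  have "coprime q N" using q by (metis prime_imp_coprime)
  then obtain Fq Gq where entireq: "entire_finite_order Fq" "entire_finite_order Gq"
    and extendsq: "\<And>s. Re s > \<sigma> + 1 - (real k - 1) / 2 \<Longrightarrow>
                          Fq s = Lambda_series f k q s \<and> Gq s = Lambda_series g k q s"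
    and FEq: "\<And>s. Fq s = \<i> ^ k * \<xi> (int q) * of_nat (N * q\<^sup>2) powr (1/2 - s) * Gq (1 - s)"
    using FE[of q] prime_ge_1_nat[OF q(1)] by blast
  have Fq: "Fq s = - F1 s" and Gq: "Gq s = - G1 s" for s
    using entire_extension_prime_eq_neg[OF q(1) Cf f_zero entire1(1) entireq(1)]
      entire_extension_prime_eq_neg[OF q(1) Cg g_zero entire1(2) entireq(2)]
      extends1 extendsq by blast+
  have fixed: "F1 s = \<xi> (int q) * of_real (real (q\<^sup>2)) powr (1/2 - s) * F1 s" for s
    using FE1[of s] FEq[of s] Fq[of s] Gq[of "1 - s"] dirichlet_character_1[OF chi]
    by (intro functional_equations_fixed_point[where c = "\<i> ^ k"]) auto
  have "real (q\<^sup>2) > 1" using prime_gt_1_nat[OF q(1)] by (simp add: power_gt1)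
  from eventually_eq_0_if_fixed_by_decaying_factor[OF this fixed, of "(of_nat k - 1) / 2"] eventually_gt_at_top[of "\<sigma> + 1"]
  have Lambda_zero: "eventually (\<lambda>x. Lambda_series f k 1 (of_real x - (of_nat k - 1) / 2) = 0) at_top"
    by eventually_elim (use extends1 in simp)
  have "f (Suc m) = 0" for m
    using Dirichlet_coeff_eq_0_if_Lambda_series_eq_0[OF Cf Lambda_zero] .
  thus False using nonzero by simp
qed

end
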